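(* Let $I$ be a non-degenerate interval and $f:I\to\mathbb{R}$ continuous, and let $D(f)$ be the set of points where $f$ has a derivative (finite or infinite). Then the set $\{(x,f(x)):x\in D(f)\}$ can be covered by countably many symmetrically $1$-monotone sets.
   Context: A metric space $(X,d)$ is symmetrically $1$-monotone if there is a linear order $<$ on $X$ such that $\max(d(x,y),d(y,z))\le d(x,z)$ whenever $x<y<z$. Subsets of $\mathbb{R}^2$ carry the Euclidean metric. *)

theory Defs
  imports "HOL-Analysis.Analysis"
begin

definition sym_1_monotone :: "'a::metric_space set \<Rightarrow> bool" where
  "sym_1_monotone S \<longleftrightarrow>
     (\<exists>R. linear_order_on S R \<and>
       (\<forall>x\<in>S. \<forall>y\<in>S. \<forall>z\<in>S.
          (x, y) \<in> R \<and> x \<noteq> y \<and> (y, z) \<in> R \<and> y \<noteq> z \<longrightarrow>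
          max (dist x y) (dist y z) \<le> dist x z))"

definition has_gen_deriv :: "(real \<Rightarrow> real) \<Rightarrow> real set \<Rightarrow> real \<Rightarrow> bool" where
  "has_gen_deriv f I x \<longleftrightarrow>
     (\<exists>L. (f has_real_derivative L) (at x within I)) \<or>
     filterlim (\<lambda>y. (f y - f x) / (y - x)) at_top (at x within I) \<or>
     filterlim (\<lambda>y. (f y - f x) / (y - x)) at_bot (at x within I)"

definition deriv_set :: "(real \<Rightarrow> real) \<Rightarrow> real set \<Rightarrow> real set" where
  "deriv_set f I = {x \<in> I. has_gen_deriv f I x}"

end

theory Submission
  imports Defs
begin

text \<open>Near a point of generalized differentiability the difference quotients of f all lie
in one of the three cones (0,\<infinity>), (-\<infinity>,0), (-1,1), and any two numbers s, t from the
same cone satisfy s t \<ge> -1. Cutting the domain into countably many pieces of small diameter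
on which the slopes are controlled by a fixed cone, any three points x < y < z of a piece
have (y - x)(z - y) + (f y - f x)(f z - f y) = (y - x)(z - y)(1 + s t) \<ge> 0, i.e. the graph
makes a non-obtuse angle at (y, f y), so the middle point is no farther from either end than
the ends are from each other.\<close>

lemma dist_le_dist_if_inner_nonneg:
  fixes a b c :: "'a::real_inner"
  assumes "inner (b - a) (c - b) \<ge> 0"
  shows "max (dist a b) (dist b c) \<le> dist a c"
proof -
  define u v where "u = b - a" and "v = c - b"
  have "0 \<le> ((norm (u + v))\<^sup>2 - (norm u)\<^sup>2 - (norm v)\<^sup>2) / 2"
    using assms dot_norm[of u v] unfolding u_def v_def by (simp only:)
  then have "(norm u)\<^sup>2 + (norm v)\<^sup>2 \<le> (norm (u + v))\<^sup>2"
    by simp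
  then have "norm u \<le> norm (u + v) \<and> norm v \<le> norm (u + v)"
    by (smt (verit) power2_le_imp_le norm_ge_zero zero_le_power2)
  then show ?thesis
    by (simp add: u_def v_def dist_norm norm_minus_commute)
qed

lemma sym_1_monotone_graph:
  fixes f :: "real \<Rightarrow> real"
  assumes "\<And>x y z. x \<in> A \<Longrightarrow> y \<in> A \<Longrightarrow> z \<in> A \<Longrightarrow> x < y \<Longrightarrow> y < z \<Longrightarrow>
      (y - x) * (z - y) + (f y - f x) * (f z - f y) \<ge> 0"
  shows "sym_1_monotone ((\<lambda>x. (x, f x)) ` A)"
proof -
  define S where "S = (\<lambda>x. (x, f x)) ` A"
  define R where "R = {(p, q). p \<in> S \<and> q \<in> S \<and> fst p \<le> fst q}"
  have "linear_order_on S R"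
    unfolding linear_order_on_def partial_order_on_def preorder_on_def refl_on_def
      trans_def antisym_def total_on_def R_def S_def by auto
  moreover have "max (dist p q) (dist q r) \<le> dist p r"
    if "p \<in> S" "q \<in> S" "r \<in> S"
      and ordered: "(p, q) \<in> R" "p \<noteq> q" "(q, r) \<in> R" "q \<noteq> r" for p q r
  proof -
    obtain x y z where "x \<in> A" "y \<in> A" "z \<in> A" and pqr: "p = (x, f x)" "q = (y, f y)" "r = (z, f z)"
      using \<open>p \<in> S\<close> \<open>q \<in> S\<close> \<open>r \<in> S\<close> unfolding S_def by auto
    moreover have "x < y" "y < z"
      using ordered pqr unfolding R_def by auto
    ultimately have "inner (q - p) (r - q) \<ge> 0"
      using assms by (simp add: inner_Pair)
    then show ?thesis
      by (rule dist_le_dist_if_inner_nonneg)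
  qed
  ultimately show ?thesis
    unfolding sym_1_monotone_def S_def by blast
qed

definition slope :: "(real \<Rightarrow> real) \<Rightarrow> real \<Rightarrow> real \<Rightarrow> real" where
  "slope f x y = (f y - f x) / (y - x)"

definition slope_cones :: "real set set" where
  "slope_cones = {{0<..}, {..<0}, {-1<..<1}}"

lemma mult_ge_minus_one_if_same_slope_cone:
  assumes "J \<in> slope_cones" "s \<in> J" "t \<in> J"
  shows "s * t \<ge> -1"
proof -
  consider "s > 0" "t > 0" | "s < 0" "t < 0" | "\<bar>s\<bar> < 1" "\<bar>t\<bar> < 1"
    using assms by (auto simp: slope_cones_def)
  then show ?thesis
  proof cases
    case 3
    then have "\<bar>s * t\<bar> \<le> 1"
      by (simp add: abs_mult mult_le_one)
    then show ?thesis by linarith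
  qed (use mult_pos_pos[of s t] mult_neg_neg[of s t] in linarith)+
qed

lemma sym_1_monotone_graph_if_slopes_in_cone:
  assumes "J \<in> slope_cones" and slopes: "\<And>a b. a \<in> A \<Longrightarrow> b \<in> A \<Longrightarrow> a < b \<Longrightarrow> slope f a b \<in> J"
  shows "sym_1_monotone ((\<lambda>x. (x, f x)) ` A)"
proof (rule sym_1_monotone_graph)
  fix x y z assume xyz: "x \<in> A" "y \<in> A" "z \<in> A" "x < y" "y < z"
  define s t where "s = slope f x y" and "t = slope f y z"
  have "s * t \<ge> -1"
    using mult_ge_minus_one_if_same_slope_cone[OF \<open>J \<in> slope_cones\<close>] slopes xyz
    unfolding s_def t_def by blast
  have "f y - f x = s * (y - x)" "f z - f y = t * (z - y)"
    using xyz by (simp_all add: s_def t_def slope_def)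
  then have "(y - x) * (z - y) + (f y - f x) * (f z - f y) = ((y - x) * (z - y)) * (1 + s * t)"
    by (simp only:) (simp add: algebra_simps)
  also have "\<dots> \<ge> 0"
    using xyz \<open>s * t \<ge> -1\<close> by simp
  finally show "(y - x) * (z - y) + (f y - f x) * (f z - f y) \<ge> 0" .
qed

lemma eventually_slope_in_cone:
  assumes "has_gen_deriv f I x"
  shows "\<exists>J \<in> slope_cones. eventually (\<lambda>y. slope f x y \<in> J) (at x within I)"
proof -
  let ?g = "slope f x" and ?F = "at x within I"
  have pos: "{0<..} \<in> slope_cones" and neg: "{..<0} \<in> slope_cones"
    and small: "{-1<..<1} \<in> slope_cones"
    unfolding slope_cones_def by simp_all
  consider L where "(?g \<longlongrightarrow> L) ?F" | "filterlim ?g at_top ?F" | "filterlim ?g at_bot ?F"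
    using assms unfolding has_gen_deriv_def has_field_derivative_iff slope_def by blast
  then show ?thesis
  proof cases
    case (1 L)
    consider "L > 0" | "L < 0" | "-1 < L" "L < 1" by linarith
    then show ?thesis
    proof cases
      case 1
      then have "eventually (\<lambda>y. ?g y \<in> {0<..}) ?F"
        using order_tendstoD(1)[OF \<open>(?g \<longlongrightarrow> L) ?F\<close>, of 0] by simp
      with pos show ?thesis by blast
    next
      case 2
      then have "eventually (\<lambda>y. ?g y \<in> {..<0}) ?F"
        using order_tendstoD(2)[OF \<open>(?g \<longlongrightarrow> L) ?F\<close>, of 0] by simp
      with neg show ?thesis by blast
    next
      case 3
      then have "eventually (\<lambda>y. ?g y \<in> {-1<..<1}) ?F"
        using eventually_conj[OF order_tendstoD(1,2)[OF \<open>(?g \<longlongrightarrow> L) ?F\<close>]]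
        by (simp add: eventually_mono)
      with small show ?thesis by blast
    qed
  next
    case 2
    then have "eventually (\<lambda>y. ?g y \<in> {0<..}) ?F"
      by (simp add: filterlim_at_top_dense)
    with pos show ?thesis by blast
  next
    case 3
    then have "eventually (\<lambda>y. ?g y \<in> {..<0}) ?F"
      by (simp add: filterlim_at_bot_dense)
    with neg show ?thesis by blast
  qed
qed

text \<open>The condition on the floor puts x into the grid cell [m/(n+1), (m+1)/(n+1)), whose
diameter is below the radius 1/(n+1) of slope control.\<close>
definition slope_piece :: "(real \<Rightarrow> real) \<Rightarrow> real set \<Rightarrow> real set \<Rightarrow> nat \<Rightarrow> int \<Rightarrow> real set" where
  "slope_piece f I J n m = {x \<in> I. \<lfloor>x * real (Suc n)\<rfloor> = m \<and>
     (\<forall>y \<in> I. y \<noteq> x \<and> dist y x < 1 / real (Suc n) \<longrightarrow> slope f x y \<in> J)}"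

lemma slope_in_cone_if_in_slope_piece:
  assumes "a \<in> slope_piece f I J n m" "b \<in> slope_piece f I J n m" "a \<noteq> b"
  shows "slope f a b \<in> J"
proof -
  have "\<bar>a * real (Suc n) - b * real (Suc n)\<bar> < 1"
    using assms(1,2) unfolding slope_piece_def floor_eq_iff by auto
  then have "\<bar>a - b\<bar> * real (Suc n) < 1"
    by (simp only: abs_mult abs_of_nat flip: left_diff_distrib)
  then have "dist b a < 1 / real (Suc n)"
    by (simp add: dist_real_def field_simps abs_minus_commute)
  then show ?thesis
    using assms unfolding slope_piece_def by auto
qed

lemma sym_1_monotone_slope_piece:
  assumes "J \<in> slope_cones"
  shows "sym_1_monotone ((\<lambda>x. (x, f x)) ` slope_piece f I J n m)"
  using assms slope_in_cone_if_in_slope_piece by (blast intro: sym_1_monotone_graph_if_slopes_in_cone)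

lemma deriv_set_subset_slope_pieces:
  "deriv_set f I \<subseteq> (\<Union>(J, n, m) \<in> slope_cones \<times> UNIV \<times> UNIV. slope_piece f I J n m)"
proof
  fix x assume "x \<in> deriv_set f I"
  then obtain J where "J \<in> slope_cones" "x \<in> I" "eventually (\<lambda>y. slope f x y \<in> J) (at x within I)"
    unfolding deriv_set_def using eventually_slope_in_cone by blast
  then obtain d where "d > 0" and d: "\<forall>y \<in> I. y \<noteq> x \<and> dist y x < d \<longrightarrow> slope f x y \<in> J"
    unfolding eventually_at by blast
  then obtain n where "1 / real (Suc n) < d"
    by (metis reals_Archimedean inverse_eq_divide)
  then have "x \<in> slope_piece f I J n \<lfloor>x * real (Suc n)\<rfloor>"
    using \<open>x \<in> I\<close> d unfolding slope_piece_def by auto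
  then show "x \<in> (\<Union>(J, n, m) \<in> slope_cones \<times> UNIV \<times> UNIV. slope_piece f I J n m)"
    using \<open>J \<in> slope_cones\<close> by blast
qed

theorem corollary6p4:
  fixes I :: "real set" and f :: "real \<Rightarrow> real"
  assumes "is_interval I" and "\<exists>a\<in>I. \<exists>b\<in>I. a < b"
    and "continuous_on I f"
  shows "\<exists>C :: (real \<times> real) set set. countable C \<and> (\<forall>S\<in>C. sym_1_monotone S) \<and>
           (\<lambda>x. (x, f x)) ` deriv_set f I \<subseteq> \<Union>C"
proof -
  define C where "C = (\<lambda>(J, n, m). (\<lambda>x. (x, f x)) ` slope_piece f I J n m) `
    (slope_cones \<times> (UNIV :: nat set) \<times> (UNIV :: int set))"
  have "countable C"
    unfolding C_def slope_cones_def by simp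
  moreover have "\<forall>S \<in> C. sym_1_monotone S"
    unfolding C_def using sym_1_monotone_slope_piece by auto
  moreover have "(\<lambda>x. (x, f x)) ` deriv_set f I \<subseteq> \<Union>C"
    unfolding C_def using deriv_set_subset_slope_pieces by fastforce
  ultimately show ?thesis by blast
qed

end
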